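(* Let $A$ be a differential $K$-algebra without exponents nor logarithm. If $V$ is a $K$-linear representation of $\mathbb{Z}$, then $(V\otimes_KE_A)^{1\otimes\partial=0}=V\otimes 1\;(\cong V)$. If $M$ is a differential module over $A$ which is free as an $A$-module, then $(M\otimes_AE_A)^{1\otimes\sigma=1}=M\otimes 1\;(\cong M)$.
   Context: $K$ is an algebraically closed field of characteristic $0$. $K[t^K]$ is the group algebra over $K$ of $(K,+)$, with $K$-basis $t^a$ ($a\in K$), $t^at^b=t^{a+b}$; $K[t,t^{-1}]$ is identified with the span of $t^n$, $n\in\mathbb{Z}$. Fix a set $\widetilde{K/\mathbb{Z}}\subset K$ of representatives of $K/\mathbb{Z}$ with $0\in\widetilde{K/\mathbb{Z}}$. $A$ is a commutative ring with unit containing $K[t,t^{-1}]$ as a subring, with a derivation $\partial:A\to A$ extending $t\frac{d}{dt}$. $A[t^K]:=A\otimes_{K[t,t^{-1}]}K[t^K]$ (free $A$-module with basis $\{t^a\}_{a\in\widetilde{K/\mathbb{Z}}}$), $E_A:=A[t^K][\ell]$ with $\ell$ an indeterminate, with derivation $\partial$ extending that of $A$, $\partial(t^a)=at^a$, $\partial(\ell)=1$. $A$ is a differential $K$-algebra without exponents nor logarithm if $\{f\in A:\partial^2 f=0\}=K$ and, for every $a\in\widetilde{K/\mathbb{Z}}\setminus\{0\}$, $\partial f+af=0$ with $f\in A$ implies $f=0$. Fix a group isomorphism $\overline{\gamma}:K/\mathbb{Z}\to K^\times$, $\gamma:=\overline\gamma\circ\pi:K\to K^\times$; $\sigma$ is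 the ring automorphism of $E_A$ fixing $A$, with $\sigma(t^a)=\gamma(a)t^a$, $\sigma(\ell)=\ell+1$. A differential module over $A$ is an $A$-module $M$ with an additive map $\nabla:M\to M$ such that $\nabla(fm)=\partial(f)m+f\nabla(m)$. A $K$-linear representation of $\mathbb{Z}$ is a $K$-vector space $V$ with a $K$-linear automorphism $[1]$. *)

theory Defs
  imports Main "HOL-Library.Function_Algebras" "HOL-Computational_Algebra.Polynomial"
begin

text \<open>The tensor product M (x)_r N is the quotient of the free module on M x N by the
  submodule generated by the bilinearity relations; its elements are represented
  as cosets (sets of finitely supported functions).\<close>

definition fsupp :: "('x \<Rightarrow> 'r::zero) \<Rightarrow> 'x set" where
  "fsupp f = {x. f x \<noteq> 0}"

definition free_elems :: "('x \<Rightarrow> 'r::zero) set" where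
  "free_elems = {f. finite (fsupp f)}"

definition fgen :: "'x \<Rightarrow> 'x \<Rightarrow> 'r::{zero,one}" where
  "fgen p = (\<lambda>q. if q = p then 1 else 0)"

definition fscale :: "'r::times \<Rightarrow> ('x \<Rightarrow> 'r) \<Rightarrow> ('x \<Rightarrow> 'r)" where
  "fscale c f = (\<lambda>q. c * f q)"

definition tensor_rels ::
  "('r::comm_ring_1 \<Rightarrow> 'm::ab_group_add \<Rightarrow> 'm) \<Rightarrow> ('r \<Rightarrow> 'n::ab_group_add \<Rightarrow> 'n)
   \<Rightarrow> ('m \<times> 'n \<Rightarrow> 'r) set" where
  "tensor_rels sM sN =
     {fgen (m + m', n) - fgen (m, n) - fgen (m', n) | m m' n. True} \<union>
     {fgen (m, n + n') - fgen (m, n) - fgen (m, n') | m n n'. True} \<union>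
     {fgen (sM c m, n) - fscale c (fgen (m, n)) | c m n. True} \<union>
     {fgen (m, sN c n) - fscale c (fgen (m, n)) | c m n. True}"

definition tensor_kernel ::
  "('r::comm_ring_1 \<Rightarrow> 'm::ab_group_add \<Rightarrow> 'm) \<Rightarrow> ('r \<Rightarrow> 'n::ab_group_add \<Rightarrow> 'n)
   \<Rightarrow> ('m \<times> 'n \<Rightarrow> 'r) set" where
  "tensor_kernel sM sN = module.span fscale (tensor_rels sM sN)"

definition tcls ::
  "('r::comm_ring_1 \<Rightarrow> 'm::ab_group_add \<Rightarrow> 'm) \<Rightarrow> ('r \<Rightarrow> 'n::ab_group_add \<Rightarrow> 'n)
   \<Rightarrow> ('m \<times> 'n \<Rightarrow> 'r) \<Rightarrow> ('m \<times> 'n \<Rightarrow> 'r) set" where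
  "tcls sM sN x = {y \<in> free_elems. x - y \<in> tensor_kernel sM sN}"

definition tensor_space ::
  "('r::comm_ring_1 \<Rightarrow> 'm::ab_group_add \<Rightarrow> 'm) \<Rightarrow> ('r \<Rightarrow> 'n::ab_group_add \<Rightarrow> 'n)
   \<Rightarrow> ('m \<times> 'n \<Rightarrow> 'r) set set" where
  "tensor_space sM sN = tcls sM sN ` free_elems"

definition tpure ::
  "('r::comm_ring_1 \<Rightarrow> 'm::ab_group_add \<Rightarrow> 'm) \<Rightarrow> ('r \<Rightarrow> 'n::ab_group_add \<Rightarrow> 'n)
   \<Rightarrow> 'm \<Rightarrow> 'n \<Rightarrow> ('m \<times> 'n \<Rightarrow> 'r) set" where
  "tpure sM sN m n = tcls sM sN (fgen (m, n))"

definition fpush :: "('x \<Rightarrow> 'y) \<Rightarrow> ('x \<Rightarrow> 'r::comm_monoid_add) \<Rightarrow> ('y \<Rightarrow> 'r)" where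
  "fpush h x = (\<lambda>q. \<Sum>p\<in>{p \<in> fsupp x. h p = q}. x p)"

text \<open>The map 1 (x) D on M (x) N induced by an r-linear map D : N -> N,
  i.e. the map m (x) n |-> m (x) D n.\<close>
definition tensor_id_map ::
  "('r::comm_ring_1 \<Rightarrow> 'm::ab_group_add \<Rightarrow> 'm) \<Rightarrow> ('r \<Rightarrow> 'n::ab_group_add \<Rightarrow> 'n)
   \<Rightarrow> ('n \<Rightarrow> 'n) \<Rightarrow> ('m \<times> 'n \<Rightarrow> 'r) set \<Rightarrow> ('m \<times> 'n \<Rightarrow> 'r) set" where
  "tensor_id_map sM sN D C =
     tcls sM sN (fpush (\<lambda>(m, n). (m, D n)) (SOME x. x \<in> C))"

definition alg_closed :: "'k::field itself \<Rightarrow> bool" where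
  "alg_closed _ = (\<forall>p :: 'k poly. degree p > 0 \<longrightarrow> (\<exists>x. poly p x = 0))"

definition is_ring_hom :: "('x::comm_ring_1 \<Rightarrow> 'y::comm_ring_1) \<Rightarrow> bool" where
  "is_ring_hom f = ((\<forall>x y. f (x + y) = f x + f y) \<and> (\<forall>x y. f (x * y) = f x * f y) \<and> f 1 = 1)"

definition lpow :: "'a::comm_ring_1 \<Rightarrow> int \<Rightarrow> 'a" where
  "lpow u n = (if 0 \<le> n then u ^ nat n else (THE v. u * v = 1) ^ nat (- n))"

text \<open>A contains K[t,t^-1] as a subring: emb : K -> A is a ring homomorphism, t is a unit,
  and the monomials t^n (n in Z) are K-linearly independent in A.\<close>
definition contains_laurent :: "('k::field \<Rightarrow> 'a::comm_ring_1) \<Rightarrow> 'a \<Rightarrow> bool" where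
  "contains_laurent emb t =
     (is_ring_hom emb \<and> inj emb \<and> (\<exists>u. t * u = 1) \<and>
      (\<forall>(c :: int \<Rightarrow> 'k) S. finite S \<longrightarrow> (\<Sum>n\<in>S. emb (c n) * lpow t n) = 0 \<longrightarrow> (\<forall>n\<in>S. c n = 0)))"

definition is_derivation :: "('a::comm_ring_1 \<Rightarrow> 'a) \<Rightarrow> bool" where
  "is_derivation d = ((\<forall>f g. d (f + g) = d f + d g) \<and> (\<forall>f g. d (f * g) = d f * g + f * d g))"

text \<open>d extends t d/dt on K[t,t^-1].\<close>
definition extends_tddt :: "('k::field_char_0 \<Rightarrow> 'a::comm_ring_1) \<Rightarrow> 'a \<Rightarrow> ('a \<Rightarrow> 'a) \<Rightarrow> bool" where
  "extends_tddt emb t d =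
     (\<forall>(c :: int \<Rightarrow> 'k) S. finite S \<longrightarrow>
        d (\<Sum>n\<in>S. emb (c n) * lpow t n) = (\<Sum>n\<in>S. emb (of_int n * c n) * lpow t n))"

definition reps_KZ :: "'k::field_char_0 set \<Rightarrow> bool" where
  "reps_KZ R = (0 \<in> R \<and> (\<forall>a. \<exists>!r. r \<in> R \<and> a - r \<in> \<int>))"

definition no_exp_no_log ::
  "('k::field_char_0 \<Rightarrow> 'a::comm_ring_1) \<Rightarrow> 'k set \<Rightarrow> ('a \<Rightarrow> 'a) \<Rightarrow> bool" where
  "no_exp_no_log emb R d =
     ({f. d (d f) = 0} = range emb \<and>
      (\<forall>a \<in> R - {0}. \<forall>f. d f + emb a * f = 0 \<longrightarrow> f = 0))"

text \<open>gamma = gammabar o pi, with gammabar : K/Z -> K^x a group isomorphism.\<close>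
definition gamma_iso :: "('k::field_char_0 \<Rightarrow> 'k) \<Rightarrow> bool" where
  "gamma_iso \<gamma> =
     ((\<forall>a b. \<gamma> (a + b) = \<gamma> a * \<gamma> b) \<and> (\<forall>a. \<gamma> a \<noteq> 0) \<and>
      (\<forall>a. \<gamma> a = 1 \<longleftrightarrow> a \<in> \<int>) \<and> (\<forall>c. c \<noteq> 0 \<longrightarrow> (\<exists>a. \<gamma> a = c)))"

text \<open>E = A[t^K][l]: iota : A -> E ring hom, T a = t^a, l the indeterminate, such that
  t^a t^b = t^(a+b), t^n (n in Z) is the element t^n of A, and the elements t^a l^n
  (a in R, n in N) form an A-basis of E.\<close>
definition is_E_A ::
  "('k::field_char_0 \<Rightarrow> 'a::comm_ring_1) \<Rightarrow> 'a \<Rightarrow> 'k set \<Rightarrow>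
   ('a \<Rightarrow> 'e::comm_ring_1) \<Rightarrow> ('k \<Rightarrow> 'e) \<Rightarrow> 'e \<Rightarrow> bool" where
  "is_E_A emb t R \<iota> T l =
     (is_ring_hom \<iota> \<and>
      (\<forall>a b. T (a + b) = T a * T b) \<and>
      (\<forall>n::int. T (of_int n) = \<iota> (lpow t n)) \<and>
      (\<forall>x. \<exists>S c. finite S \<and> S \<subseteq> R \<times> UNIV \<and>
              x = (\<Sum>(a, n)\<in>S. \<iota> (c a n) * T a * l ^ n)) \<and>
      (\<forall>S c. finite S \<longrightarrow> S \<subseteq> R \<times> UNIV \<longrightarrow>
              (\<Sum>(a, n)\<in>S. \<iota> (c a n) * T a * l ^ n) = 0 \<longrightarrow> (\<forall>(a, n)\<in>S. c a n = 0)))"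

definition is_E_derivation ::
  "('k::field_char_0 \<Rightarrow> 'a::comm_ring_1) \<Rightarrow> ('a \<Rightarrow> 'a) \<Rightarrow>
   ('a \<Rightarrow> 'e::comm_ring_1) \<Rightarrow> ('k \<Rightarrow> 'e) \<Rightarrow> 'e \<Rightarrow> ('e \<Rightarrow> 'e) \<Rightarrow> bool" where
  "is_E_derivation emb d \<iota> T l dE =
     (is_derivation dE \<and> (\<forall>f. dE (\<iota> f) = \<iota> (d f)) \<and>
      (\<forall>a. dE (T a) = \<iota> (emb a) * T a) \<and> dE l = 1)"

definition is_E_sigma ::
  "('k::field_char_0 \<Rightarrow> 'a::comm_ring_1) \<Rightarrow> ('k \<Rightarrow> 'k) \<Rightarrow>
   ('a \<Rightarrow> 'e::comm_ring_1) \<Rightarrow> ('k \<Rightarrow> 'e) \<Rightarrow> 'e \<Rightarrow> ('e \<Rightarrow> 'e) \<Rightarrow> bool" where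
  "is_E_sigma emb \<gamma> \<iota> T l \<sigma> =
     (is_ring_hom \<sigma> \<and> bij \<sigma> \<and> (\<forall>f. \<sigma> (\<iota> f) = \<iota> f) \<and>
      (\<forall>a. \<sigma> (T a) = \<iota> (emb (\<gamma> a)) * T a) \<and> \<sigma> l = l + 1)"

definition diff_module ::
  "('a::comm_ring_1 \<Rightarrow> 'a) \<Rightarrow> ('a \<Rightarrow> 'm::ab_group_add \<Rightarrow> 'm) \<Rightarrow> ('m \<Rightarrow> 'm) \<Rightarrow> bool" where
  "diff_module d sM nabla =
     (module sM \<and> (\<forall>x y. nabla (x + y) = nabla x + nabla y) \<and>
      (\<forall>f x. nabla (sM f x) = sM (d f) x + sM f (nabla x)))"

definition free_module :: "('a::comm_ring_1 \<Rightarrow> 'm::ab_group_add \<Rightarrow> 'm) \<Rightarrow> bool" where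
  "free_module sM = (\<exists>B. \<not> module.dependent sM B \<and> module.span sM B = UNIV)"

definition Z_rep :: "('k::field \<Rightarrow> 'v::ab_group_add \<Rightarrow> 'v) \<Rightarrow> ('v \<Rightarrow> 'v) \<Rightarrow> bool" where
  "Z_rep sV rho = (vector_space sV \<and> Vector_Spaces.linear sV sV rho \<and> bij rho)"

end

theory Submission
  imports Defs
begin

text \<open>After choosing a basis B of V (resp. M), an element of the tensor product is a finitely
  supported family \<open>(e\<^sub>b)\<close> in E indexed by B, represented modulo the bilinearity relations by
  \<open>\<Sigma> b \<otimes> e\<^sub>b\<close>, and \<open>1 \<otimes> \<partial>\<close> (resp. \<open>1 \<otimes> \<sigma>\<close>) acts on each \<open>e\<^sub>b\<close>. So it suffices to show that the
  kernel of \<open>\<partial>\<close> on E is K and that the invariants of \<sigma> on E are A.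
  Write \<open>x = \<Sigma> f\<^sub>a\<^sub>,\<^sub>n t\<^sup>a \<ell>\<^sup>n\<close> and let N be the top degree in \<open>\<ell>\<close> for some a, with coefficient f.
  If \<open>\<partial>x = 0\<close>, the coefficient of \<open>t\<^sup>a \<ell>\<^sup>N\<close> gives \<open>\<partial>f + a f = 0\<close>, so a = 0 as A has no exponents;
  if N > 0, the coefficient g of \<open>t\<^sup>0 \<ell>\<^sup>N\<^sup>-\<^sup>1\<close> satisfies \<open>\<partial>g = -N f\<close>, so \<open>\<partial>\<^sup>2g = 0\<close>, g is a constant
  as A has no logarithm, and N f = 0. If \<open>\<sigma>x = x\<close>, the same two coefficients give \<open>\<gamma>(a) f = f\<close>,
  so a = 0, and then N f = 0. Either way only \<open>f\<^sub>0\<^sub>,\<^sub>0\<close> survives.\<close>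

section \<open>Coordinates with respect to a basis\<close>

locale module_with_basis = module s for s :: "'r::comm_ring_1 \<Rightarrow> 'x::ab_group_add \<Rightarrow> 'x" +
  fixes g :: "'i \<Rightarrow> 'x" and J :: "'i set"
  assumes spanning: "\<And>x. \<exists>S c. finite S \<and> S \<subseteq> J \<and> x = (\<Sum>i\<in>S. s (c i) (g i))"
    and independent:
      "\<And>S c i. finite S \<Longrightarrow> S \<subseteq> J \<Longrightarrow> (\<Sum>i\<in>S. s (c i) (g i)) = 0 \<Longrightarrow> i \<in> S \<Longrightarrow> c i = 0"
begin

definition coords_of :: "'x \<Rightarrow> ('i \<Rightarrow> 'r) \<Rightarrow> bool" where
  "coords_of x c \<longleftrightarrow> finite (fsupp c) \<and> fsupp c \<subseteq> J \<and> x = (\<Sum>i\<in>fsupp c. s (c i) (g i))"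

definition coord :: "'x \<Rightarrow> 'i \<Rightarrow> 'r" where
  "coord x = (THE c. coords_of x c)"

lemma sum_fsupp_extend:
  assumes "finite S" "fsupp c \<subseteq> S"
  shows "(\<Sum>i\<in>fsupp c. s (c i) (g i)) = (\<Sum>i\<in>S. s (c i) (g i))"
  by (rule sum.mono_neutral_left) (use assms in \<open>auto simp: fsupp_def\<close>)

lemma coords_of_unique:
  assumes "coords_of x c" "coords_of x c'"
  shows "c = c'"
proof
  fix i
  let ?U = "fsupp c \<union> fsupp c'"
  have U: "finite ?U" "?U \<subseteq> J" using assms by (auto simp: coords_of_def)
  have x: "x = (\<Sum>i\<in>?U. s (c i) (g i))" "x = (\<Sum>i\<in>?U. s (c' i) (g i))"
    using assms sum_fsupp_extend[OF U(1), of c] sum_fsupp_extend[OF U(1), of c']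
    by (auto simp: coords_of_def)
  have "(\<Sum>i\<in>?U. s (c i - c' i) (g i)) = (\<Sum>i\<in>?U. s (c i) (g i)) - (\<Sum>i\<in>?U. s (c' i) (g i))"
    by (simp only: scale_left_diff_distrib sum_subtractf)
  also have "\<dots> = 0"
    by (simp flip: x)
  finally have z: "(\<Sum>i\<in>?U. s (c i - c' i) (g i)) = 0" .
  show "c i = c' i"
  proof (cases "i \<in> ?U")
    case True
    then show ?thesis using independent[OF U z] by simp
  qed (simp add: fsupp_def)
qed

lemma coords_ofI:
  assumes "finite S" "S \<subseteq> J" "\<And>i. i \<notin> S \<Longrightarrow> c i = 0" "x = (\<Sum>i\<in>S. s (c i) (g i))"
  shows "coords_of x c"
proof -
  have "fsupp c \<subseteq> S" using assms(3) by (auto simp: fsupp_def)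
  then show ?thesis
    using assms sum_fsupp_extend[of S c] by (auto simp: coords_of_def intro: finite_subset)
qed

lemma coords_of_coord: "coords_of x (coord x)"
proof -
  obtain S c where S: "finite S" "S \<subseteq> J" and x: "x = (\<Sum>i\<in>S. s (c i) (g i))"
    using spanning by blast
  have "coords_of x (\<lambda>i. if i \<in> S then c i else 0)"
    by (rule coords_ofI[OF S]) (auto simp: x intro: sum.cong)
  then show ?thesis
    unfolding coord_def by (metis theI coords_of_unique)
qed

lemma coord_eqI:
  assumes "finite S" "S \<subseteq> J" "\<And>i. i \<notin> S \<Longrightarrow> c i = 0" "x = (\<Sum>i\<in>S. s (c i) (g i))"
  shows "coord x = c"
  using coords_of_unique[OF coords_of_coord coords_ofI[OF assms]] .

lemma coord_sum_basis:
  assumes "finite S" "S \<subseteq> J"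
  shows "coord (\<Sum>i\<in>S. s (c i) (g i)) = (\<lambda>i. if i \<in> S then c i else 0)"
  by (rule coord_eqI) (use assms in \<open>auto intro: sum.cong\<close>)

lemma finite_fsupp_coord: "finite (fsupp (coord x))"
  and fsupp_coord_subset: "fsupp (coord x) \<subseteq> J"
  using coords_of_coord[of x] by (auto simp: coords_of_def)

lemma coord_repr:
  assumes "finite S" "fsupp (coord x) \<subseteq> S"
  shows "x = (\<Sum>i\<in>S. s (coord x i) (g i))"
  using coords_of_coord[of x] sum_fsupp_extend[OF assms] by (simp add: coords_of_def)

lemma coord_inject: "coord x = coord y \<Longrightarrow> x = y"
  using coord_repr[OF finite_fsupp_coord subset_refl, of x] coord_repr[OF finite_fsupp_coord subset_refl, of y]
  by simp

lemma coord_basis: "j \<in> J \<Longrightarrow> coord (g j) = (\<lambda>i. if i = j then 1 else 0)"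
  using coord_sum_basis[of "{j}" "\<lambda>_. 1"] by auto

lemma coord_zero: "coord 0 = (\<lambda>i. 0)"
  using coord_sum_basis[of "{}"] by auto

lemma coord_add: "coord (x + y) = (\<lambda>i. coord x i + coord y i)"
proof (rule coord_eqI)
  let ?S = "fsupp (coord x) \<union> fsupp (coord y)"
  show "finite ?S" "?S \<subseteq> J" by (simp_all add: finite_fsupp_coord fsupp_coord_subset)
  show "coord x i + coord y i = 0" if "i \<notin> ?S" for i using that by (simp add: fsupp_def)
  show "x + y = (\<Sum>i\<in>?S. s (coord x i + coord y i) (g i))"
  proof -
    have "x + y = (\<Sum>i\<in>?S. s (coord x i) (g i)) + (\<Sum>i\<in>?S. s (coord y i) (g i))"
      by (intro arg_cong2[where f = "(+)"] coord_repr) (simp_all add: finite_fsupp_coord)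
    then show ?thesis by (simp only: scale_left_distrib sum.distrib)
  qed
qed

lemma coord_scale: "coord (s a x) = (\<lambda>i. a * coord x i)"
proof (rule coord_eqI)
  let ?S = "fsupp (coord x)"
  show "finite ?S" "?S \<subseteq> J" by (simp_all add: finite_fsupp_coord fsupp_coord_subset)
  show "a * coord x i = 0" if "i \<notin> ?S" for i using that by (simp add: fsupp_def)
  show "s a x = (\<Sum>i\<in>?S. s (a * coord x i) (g i))"
  proof -
    have "s a x = s a (\<Sum>i\<in>?S. s (coord x i) (g i))"
      by (rule arg_cong[OF coord_repr]) (simp_all add: finite_fsupp_coord)
    then show ?thesis by (simp only: scale_sum_right scale_scale)
  qed
qed

lemma coord_sum: "coord (\<Sum>k\<in>K. f k) = (\<lambda>i. \<Sum>k\<in>K. coord (f k) i)"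
  by (induct K rule: infinite_finite_induct) (auto simp: coord_zero coord_add)

end

lemma module_with_basis_of_basis:
  assumes "module s" "\<not> module.dependent s B" "module.span s B = UNIV"
  shows "module_with_basis s id B"
proof -
  interpret module s by (rule assms(1))
  show ?thesis
  proof unfold_locales
    fix x
    have "x \<in> span B" using assms(3) by simp
    then show "\<exists>S c. finite S \<and> S \<subseteq> B \<and> x = (\<Sum>i\<in>S. s (c i) (id i))"
      unfolding span_explicit by auto
  next
    fix S c i
    assume "finite S" "S \<subseteq> B" "(\<Sum>i\<in>S. s (c i) (id i)) = 0" "i \<in> S"
    then show "c i = 0" using assms(2) unfolding dependent_explicit by auto
  qed
qed

section \<open>Tensor products with a free module\<close>

lemma sum_fun_apply: "(\<Sum>a\<in>A. f a) x = (\<Sum>a\<in>A. f a x)"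
  by (induct A rule: infinite_finite_induct) auto

lemma free_elems_iff: "x \<in> free_elems \<longleftrightarrow> finite (fsupp x)"
  by (simp add: free_elems_def)

lemma zero_free_elems: "(0 :: 'x \<Rightarrow> 'r::comm_ring_1) \<in> free_elems"
  by (simp add: free_elems_iff fsupp_def)

lemma add_free_elems:
  "x \<in> free_elems \<Longrightarrow> y \<in> free_elems \<Longrightarrow> (x + y :: 'x \<Rightarrow> 'r::comm_ring_1) \<in> free_elems"
  unfolding free_elems_iff by (rule finite_subset[of _ "fsupp x \<union> fsupp y"]) (auto simp: fsupp_def)

lemma diff_free_elems:
  "x \<in> free_elems \<Longrightarrow> y \<in> free_elems \<Longrightarrow> (x - y :: 'x \<Rightarrow> 'r::comm_ring_1) \<in> free_elems"
  unfolding free_elems_iff by (rule finite_subset[of _ "fsupp x \<union> fsupp y"]) (auto simp: fsupp_def)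

lemma fscale_free_elems: "x \<in> free_elems \<Longrightarrow> fscale c (x :: 'x \<Rightarrow> 'r::comm_ring_1) \<in> free_elems"
  unfolding free_elems_iff by (rule finite_subset[of _ "fsupp x"]) (auto simp: fsupp_def fscale_def)

lemma fgen_free_elems: "(fgen p :: 'x \<Rightarrow> 'r::comm_ring_1) \<in> free_elems"
  unfolding free_elems_iff by (rule finite_subset[of _ "{p}"]) (auto simp: fsupp_def fgen_def)

lemma sum_free_elems:
  "(\<And>k. k \<in> A \<Longrightarrow> f k \<in> free_elems) \<Longrightarrow> (sum f A :: 'x \<Rightarrow> 'r::comm_ring_1) \<in> free_elems"
  by (induct A rule: infinite_finite_induct) (auto simp: zero_free_elems add_free_elems)

lemma free_elems_expand:
  fixes x :: "'x \<Rightarrow> 'r::comm_ring_1"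
  assumes "x \<in> free_elems"
  shows "x = (\<Sum>p\<in>fsupp x. fscale (x p) (fgen p))"
proof
  fix q
  have "(\<Sum>p\<in>fsupp x. fscale (x p) (fgen p)) q = (\<Sum>p\<in>fsupp x. if p = q then x p else 0)"
    by (auto simp: sum_fun_apply fscale_def fgen_def intro: sum.cong)
  also have "\<dots> = x q"
    using assms by (simp add: free_elems_iff sum.delta' fsupp_def)
  finally show "x q = (\<Sum>p\<in>fsupp x. fscale (x p) (fgen p)) q" by simp
qed

lemma fpush_expand:
  fixes x :: "'x \<Rightarrow> 'r::comm_ring_1"
  assumes "x \<in> free_elems"
  shows "fpush h x = (\<Sum>p\<in>fsupp x. fscale (x p) (fgen (h p)))"
proof
  fix q
  have "(\<Sum>p\<in>fsupp x. fscale (x p) (fgen (h p))) q = (\<Sum>p\<in>fsupp x. if h p = q then x p else 0)"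
    by (auto simp: sum_fun_apply fscale_def fgen_def intro: sum.cong)
  also have "\<dots> = fpush h x q"
    using assms by (simp add: free_elems_iff sum.inter_filter fpush_def)
  finally show "fpush h x q = (\<Sum>p\<in>fsupp x. fscale (x p) (fgen (h p))) q" by simp
qed

lemma module_fscale: "module (fscale :: 'r::comm_ring_1 \<Rightarrow> ('x \<Rightarrow> 'r) \<Rightarrow> ('x \<Rightarrow> 'r))"
  by unfold_locales (auto simp: fscale_def fun_eq_iff algebra_simps)

locale free_tensor = M: module_with_basis sM id B + N: module sN
  for sM :: "'r::comm_ring_1 \<Rightarrow> 'm::ab_group_add \<Rightarrow> 'm" and B :: "'m set"
    and sN :: "'r \<Rightarrow> 'n::ab_group_add \<Rightarrow> 'n"
begin

sublocale F: module "fscale :: 'r \<Rightarrow> ('m \<times> 'n \<Rightarrow> 'r) \<Rightarrow> _"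
  by (rule module_fscale)

abbreviation Ker :: "('m \<times> 'n \<Rightarrow> 'r) set" where
  "Ker \<equiv> tensor_kernel sM sN"

text \<open>As M is free on B, M \<otimes> N is isomorphic to the finitely supported families in N indexed
  by B; \<open>tcomp x b\<close> is the b-th member of the family of the class of x.\<close>

definition tcomp :: "('m \<times> 'n \<Rightarrow> 'r) \<Rightarrow> 'm \<Rightarrow> 'n" where
  "tcomp x b = (\<Sum>p\<in>fsupp x. sN (x p) (sN (M.coord (fst p) b) (snd p)))"

lemma tcomp_eq_sum:
  assumes "finite S" "fsupp x \<subseteq> S"
  shows "tcomp x b = (\<Sum>p\<in>S. sN (x p) (sN (M.coord (fst p) b) (snd p)))"
  unfolding tcomp_def by (rule sum.mono_neutral_left) (use assms in \<open>auto simp: fsupp_def\<close>)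

lemma tcomp_add:
  assumes "x \<in> free_elems" "y \<in> free_elems"
  shows "tcomp (x + y) b = tcomp x b + tcomp y b"
proof -
  let ?S = "fsupp x \<union> fsupp y"
  have S: "finite ?S" using assms by (simp add: free_elems_iff)
  have "fsupp (x + y) \<subseteq> ?S" by (auto simp: fsupp_def)
  then show ?thesis
    using tcomp_eq_sum[OF S] by (simp add: N.scale_left_distrib distrib_right sum.distrib)
qed

lemma tcomp_diff:
  assumes "x \<in> free_elems" "y \<in> free_elems"
  shows "tcomp (x - y) b = tcomp x b - tcomp y b"
proof -
  let ?S = "fsupp x \<union> fsupp y"
  have S: "finite ?S" using assms by (simp add: free_elems_iff)
  have "fsupp (x - y) \<subseteq> ?S" by (auto simp: fsupp_def)
  then show ?thesis
    using tcomp_eq_sum[OF S] by (simp add: N.scale_left_diff_distrib left_diff_distrib sum_subtractf)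
qed

lemma tcomp_fscale:
  assumes "x \<in> free_elems"
  shows "tcomp (fscale c x) b = sN c (tcomp x b)"
proof -
  have "fsupp (fscale c x) \<subseteq> fsupp x" by (auto simp: fsupp_def fscale_def)
  then show ?thesis
    using assms tcomp_eq_sum[of "fsupp x" "fscale c x"]
    by (simp add: free_elems_iff tcomp_def fscale_def N.scale_sum_right mult.assoc)
qed

lemma tcomp_zero: "tcomp 0 b = 0"
  by (simp add: tcomp_def fsupp_def)

lemma tcomp_fgen: "tcomp (fgen p) b = sN (M.coord (fst p) b) (snd p)"
  using tcomp_eq_sum[of "{p}" "fgen p"] by (simp add: fsupp_def fgen_def)

lemma tcomp_sum:
  assumes "\<And>k. k \<in> A \<Longrightarrow> f k \<in> free_elems"
  shows "tcomp (sum f A) b = (\<Sum>k\<in>A. tcomp (f k) b)"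
  using assms
  by (induct A rule: infinite_finite_induct) (simp_all add: tcomp_zero tcomp_add sum_free_elems)

lemma tensor_rels_subset_Ker: "tensor_rels sM sN \<subseteq> Ker"
  unfolding tensor_kernel_def by (rule F.span_superset)

lemma fgen_add_left_in_Ker: "fgen (m + m', n) - fgen (m, n) - fgen (m', n) \<in> Ker"
  and fgen_add_right_in_Ker: "fgen (m, n + n') - fgen (m, n) - fgen (m, n') \<in> Ker"
  and fgen_scale_left_in_Ker: "fgen (sM c m, n) - fscale c (fgen (m, n)) \<in> Ker"
  and fgen_scale_right_in_Ker: "fgen (m, sN c n) - fscale c (fgen (m, n)) \<in> Ker"
  by (rule subsetD[OF tensor_rels_subset_Ker], unfold tensor_rels_def, blast)+

lemma tcomp_tensor_rels:
  "r \<in> tensor_rels sM sN \<Longrightarrow> r \<in> free_elems \<and> (\<forall>b. tcomp r b = 0)"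
  unfolding tensor_rels_def
  by (auto simp: diff_free_elems fgen_free_elems fscale_free_elems tcomp_diff tcomp_fgen
      tcomp_fscale M.coord_add M.coord_scale N.scale_left_distrib N.scale_right_distrib mult.commute)

lemma tcomp_Ker: "x \<in> Ker \<Longrightarrow> x \<in> free_elems \<and> (\<forall>b. tcomp x b = 0)"
  unfolding tensor_kernel_def
proof (induct rule: F.span_induct_alt)
  case base
  show ?case using zero_free_elems tcomp_zero by metis
next
  case (step c r y)
  have r: "r \<in> free_elems" "\<And>b. tcomp r b = 0" using tcomp_tensor_rels[OF step(1)] by auto
  have y: "y \<in> free_elems" "\<And>b. tcomp y b = 0" using step(2) by auto
  have cr: "fscale c r \<in> free_elems" using fscale_free_elems[OF r(1)] .
  show ?case
    using add_free_elems[OF cr y(1)] tcomp_add[OF cr y(1)] tcomp_fscale[OF r(1)] r(2) y(2)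
    by (metis N.scale_zero_right add_0)
qed

lemma Ker_diff_refl: "x - x \<in> Ker"
  unfolding tensor_kernel_def by (simp add: F.span_zero)

lemma Ker_diff_trans: "x - y \<in> Ker \<Longrightarrow> y - z \<in> Ker \<Longrightarrow> x - z \<in> Ker"
  using F.span_add[of "x - y" _ "y - z"] unfolding tensor_kernel_def by simp

lemma Ker_diff_sym: "x - y \<in> Ker \<Longrightarrow> y - x \<in> Ker"
  using F.span_neg[of "x - y"] unfolding tensor_kernel_def by simp

lemma Ker_diff_add: "x - y \<in> Ker \<Longrightarrow> x' - y' \<in> Ker \<Longrightarrow> (x + x') - (y + y') \<in> Ker"
  using F.span_add[of "x - y" _ "x' - y'"] unfolding tensor_kernel_def by (simp add: algebra_simps)

lemma Ker_diff_sum: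
  "(\<And>b. b \<in> S \<Longrightarrow> X b - Y b \<in> Ker) \<Longrightarrow> (\<Sum>b\<in>S. X b) - (\<Sum>b\<in>S. Y b) \<in> Ker"
  unfolding sum_subtractf[symmetric] tensor_kernel_def by (rule F.span_sum)

lemma fgen_zero_right_in_Ker: "fgen (m, 0) \<in> Ker"
  using F.span_neg[OF fgen_add_right_in_Ker[of m 0 0, unfolded tensor_kernel_def]]
  unfolding tensor_kernel_def by simp

lemma fgen_zero_left_in_Ker: "fgen (0, n) \<in> Ker"
  using F.span_neg[OF fgen_add_left_in_Ker[of 0 0 n, unfolded tensor_kernel_def]]
  unfolding tensor_kernel_def by simp

lemma fgen_sum_left_in_Ker:
  assumes "finite S"
  shows "fgen (\<Sum>b\<in>S. h b, n) - (\<Sum>b\<in>S. fgen (h b, n)) \<in> Ker"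
  using assms
proof (induct S rule: finite_induct)
  case empty
  show ?case by (simp only: sum.empty diff_zero fgen_zero_left_in_Ker)
next
  case (insert a S)
  let ?W = "\<Sum>b\<in>S. h b"
  have "fgen (h a + ?W, n) - (fgen (h a, n) + fgen (?W, n)) \<in> Ker"
    using fgen_add_left_in_Ker[of "h a" ?W n] by (simp only: diff_diff_eq)
  moreover have "(fgen (h a, n) + fgen (?W, n)) - (fgen (h a, n) + (\<Sum>b\<in>S. fgen (h b, n))) \<in> Ker"
    by (simp only: add_diff_cancel_left insert(3))
  ultimately show ?case
    unfolding sum.insert[OF insert(1,2)] by (rule Ker_diff_trans)
qed

lemma fgen_sum_right_in_Ker:
  "(\<Sum>b\<in>S. fgen (b, f b)) + (\<Sum>b\<in>S. fgen (b, f' b)) - (\<Sum>b\<in>S. fgen (b, f b + f' b)) \<in> Ker"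
proof -
  have "(\<Sum>b\<in>S. fgen (b, f b + f' b)) - ((\<Sum>b\<in>S. fgen (b, f b)) + (\<Sum>b\<in>S. fgen (b, f' b)))
        = (\<Sum>b\<in>S. fgen (b, f b + f' b) - fgen (b, f b) - (fgen (b, f' b) :: 'm \<times> 'n \<Rightarrow> 'r))"
    by (simp only: sum_subtractf diff_diff_eq sum.distrib)
  also have "\<dots> \<in> Ker"
    using fgen_add_right_in_Ker unfolding tensor_kernel_def by (intro F.span_sum)
  finally show ?thesis by (rule Ker_diff_sym)
qed

lemma fscale_fgen_equiv_components:
  assumes S: "finite S" "fsupp (M.coord m) \<subseteq> S"
  shows "fscale c (fgen (m, n)) - (\<Sum>b\<in>S. fgen (b, tcomp (fscale c (fgen (m, n))) b)) \<in> Ker"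
proof -
  have m: "(\<Sum>b\<in>S. sM (M.coord m b) b) = m"
    using M.coord_repr[OF S] by simp
  have "fscale c (fgen (m, n)) - fgen (m, sN c n) \<in> Ker"
    by (rule Ker_diff_sym[OF fgen_scale_right_in_Ker])
  moreover have "fgen (m, sN c n) - (\<Sum>b\<in>S. fgen (sM (M.coord m b) b, sN c n)) \<in> Ker"
    using fgen_sum_left_in_Ker[OF S(1), of "\<lambda>b. sM (M.coord m b) b" "sN c n"] unfolding m .
  moreover have "(\<Sum>b\<in>S. fgen (sM (M.coord m b) b, sN c n))
      - (\<Sum>b\<in>S. fgen (b, sN (M.coord m b) (sN c n))) \<in> Ker"
    by (rule Ker_diff_sum) (rule Ker_diff_trans[OF fgen_scale_left_in_Ker Ker_diff_sym[OF fgen_scale_right_in_Ker]])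
  moreover have "sN (M.coord m b) (sN c n) = tcomp (fscale c (fgen (m, n))) b" for b
    by (simp add: tcomp_fscale[OF fgen_free_elems] tcomp_fgen mult.commute)
  ultimately show ?thesis
    by (metis (no_types, lifting) Ker_diff_trans sum.cong)
qed

lemma sum_fscale_fgen_equiv_components:
  assumes "finite F" "finite S" "\<And>p. p \<in> F \<Longrightarrow> fsupp (M.coord (fst p)) \<subseteq> S"
  shows "(\<Sum>p\<in>F. fscale (c p) (fgen p))
    - (\<Sum>b\<in>S. fgen (b, tcomp (\<Sum>p\<in>F. fscale (c p) (fgen p)) b)) \<in> Ker"
  using assms(1,3)
proof (induct F rule: finite_induct)
  case empty
  have "(\<Sum>b\<in>S. fgen (b, 0)) \<in> Ker"
    using fgen_zero_right_in_Ker unfolding tensor_kernel_def by (intro F.span_sum)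
  then show ?case
    using Ker_diff_sym[of "\<Sum>b\<in>S. fgen (b, 0)" 0] by (simp only: sum.empty tcomp_zero diff_zero)
next
  case (insert a F)
  let ?X = "fscale (c a) (fgen a)" and ?Y = "\<Sum>p\<in>F. fscale (c p) (fgen p)"
  have free: "?X \<in> free_elems" "?Y \<in> free_elems"
    by (simp_all add: fscale_free_elems fgen_free_elems sum_free_elems)
  have "?X - (\<Sum>b\<in>S. fgen (b, tcomp ?X b)) \<in> Ker"
    using fscale_fgen_equiv_components[OF assms(2) insert(4)[of a]] by (cases a) simp
  moreover have "?Y - (\<Sum>b\<in>S. fgen (b, tcomp ?Y b)) \<in> Ker"
    by (rule insert(3)) (use insert(4) in blast)
  ultimately have "(?X + ?Y) - ((\<Sum>b\<in>S. fgen (b, tcomp ?X b)) + (\<Sum>b\<in>S. fgen (b, tcomp ?Y b))) \<in> Ker"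
    by (rule Ker_diff_add)
  from Ker_diff_trans[OF this fgen_sum_right_in_Ker]
  show ?case
    unfolding sum.insert[OF insert(1,2)] tcomp_add[OF free] .
qed

lemma Ker_iff_tcomp_eq_0:
  assumes "x \<in> free_elems"
  shows "x \<in> Ker \<longleftrightarrow> (\<forall>b. tcomp x b = 0)"
proof
  assume zero: "\<forall>b. tcomp x b = 0"
  let ?S = "\<Union>p\<in>fsupp x. fsupp (M.coord (fst p))"
  have "(\<Sum>p\<in>fsupp x. fscale (x p) (fgen p))
    - (\<Sum>b\<in>?S. fgen (b, tcomp (\<Sum>p\<in>fsupp x. fscale (x p) (fgen p)) b)) \<in> Ker"
    by (rule sum_fscale_fgen_equiv_components)
      (use assms M.finite_fsupp_coord in \<open>auto simp: free_elems_iff\<close>)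
  then have "x - (\<Sum>b\<in>?S. fgen (b, 0)) \<in> Ker"
    unfolding free_elems_expand[OF assms, symmetric] zero[rule_format] .
  moreover have "(\<Sum>b\<in>?S. fgen (b, 0)) \<in> Ker"
    using fgen_zero_right_in_Ker unfolding tensor_kernel_def by (intro F.span_sum)
  ultimately show "x \<in> Ker"
    using F.span_add unfolding tensor_kernel_def by fastforce
qed (use tcomp_Ker in blast)

lemma mem_tcls_iff: "z \<in> tcls sM sN x \<longleftrightarrow> z \<in> free_elems \<and> x - z \<in> Ker"
  by (simp add: tcls_def)

lemma tcls_eq_iff:
  assumes "x \<in> free_elems" "y \<in> free_elems"
  shows "tcls sM sN x = tcls sM sN y \<longleftrightarrow> (\<forall>b. tcomp x b = tcomp y b)"
proof -
  have "tcls sM sN x = tcls sM sN y \<longleftrightarrow> x - y \<in> Ker"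
  proof
    assume "tcls sM sN x = tcls sM sN y"
    moreover have "y \<in> tcls sM sN y" using assms(2) Ker_diff_refl by (simp add: mem_tcls_iff)
    ultimately show "x - y \<in> Ker" using mem_tcls_iff by blast
  next
    assume "x - y \<in> Ker"
    then show "tcls sM sN x = tcls sM sN y"
      unfolding tcls_def using Ker_diff_trans Ker_diff_sym by blast
  qed
  also have "\<dots> \<longleftrightarrow> (\<forall>b. tcomp x b = tcomp y b)"
    using Ker_iff_tcomp_eq_0[OF diff_free_elems[OF assms]] by (simp add: tcomp_diff[OF assms])
  finally show ?thesis .
qed

lemma tcomp_some_tcls:
  assumes "x \<in> free_elems"
  shows "(SOME z. z \<in> tcls sM sN x) \<in> free_elems"
    and "tcomp (SOME z. z \<in> tcls sM sN x) b = tcomp x b"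
proof -
  have "x \<in> tcls sM sN x" using assms Ker_diff_refl by (simp add: mem_tcls_iff)
  then have z: "(SOME z. z \<in> tcls sM sN x) \<in> tcls sM sN x"
    using someI[of "\<lambda>z. z \<in> tcls sM sN x"] by blast
  then show free: "(SOME z. z \<in> tcls sM sN x) \<in> free_elems" by (simp add: mem_tcls_iff)
  from z have "\<forall>b. tcomp (x - (SOME z. z \<in> tcls sM sN x)) b = 0"
    using tcomp_Ker by (simp add: mem_tcls_iff)
  then show "tcomp (SOME z. z \<in> tcls sM sN x) b = tcomp x b"
    by (simp add: tcomp_diff[OF assms free])
qed

lemma tcls_in_range_tpure_iff:
  assumes x: "x \<in> free_elems"
  shows "tcls sM sN x \<in> range (\<lambda>m. tpure sM sN m u) \<longleftrightarrow> (\<forall>b. \<exists>k. tcomp x b = sN k u)"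
proof
  assume "tcls sM sN x \<in> range (\<lambda>m. tpure sM sN m u)"
  then obtain m where "tcls sM sN x = tcls sM sN (fgen (m, u))" unfolding tpure_def by blast
  then have "tcomp x b = sN (M.coord m b) u" for b
    using tcls_eq_iff[OF x fgen_free_elems] by (simp add: tcomp_fgen)
  then show "\<forall>b. \<exists>k. tcomp x b = sN k u" by blast
next
  assume "\<forall>b. \<exists>k. tcomp x b = sN k u"
  then obtain k where k: "\<And>b. tcomp x b = sN (k b) u" by metis
  let ?S = "\<Union>p\<in>fsupp x. fsupp (M.coord (fst p))"
  have S: "finite ?S" "?S \<subseteq> B"
    using x M.finite_fsupp_coord M.fsupp_coord_subset by (auto simp: free_elems_iff)
  have outside: "tcomp x b = 0" if "b \<notin> ?S" for b
    using that by (auto simp: tcomp_def fsupp_def intro!: sum.neutral)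
  define m where "m = (\<Sum>b\<in>?S. sM (k b) b)"
  have "M.coord m = (\<lambda>b. if b \<in> ?S then k b else 0)"
    using M.coord_sum_basis[OF S, of k] by (simp add: m_def)
  then have "tcomp x b = tcomp (fgen (m, u)) b" for b
    using k outside[of b] by (simp add: tcomp_fgen)
  then show "tcls sM sN x \<in> range (\<lambda>m. tpure sM sN m u)"
    using tcls_eq_iff[OF x fgen_free_elems] unfolding tpure_def by blast
qed

lemma inj_tpure:
  assumes "\<And>k. sN k u = 0 \<Longrightarrow> k = 0"
  shows "inj (\<lambda>m. tpure sM sN m u)"
proof (rule injI)
  fix m m'
  assume "tpure sM sN m u = tpure sM sN m' u"
  then have "sN (M.coord m b) u = sN (M.coord m' b) u" for b
    using tcls_eq_iff[OF fgen_free_elems fgen_free_elems] unfolding tpure_def by (simp add: tcomp_fgen)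
  then have "M.coord m b = M.coord m' b" for b
    using assms[of "M.coord m b - M.coord m' b"] by (simp add: N.scale_left_diff_distrib)
  then show "m = m'" by (intro M.coord_inject ext)
qed

lemma tensor_space_Collect_eq_range_tpure:
  assumes "\<And>x. x \<in> free_elems \<Longrightarrow> P (tcls sM sN x) \<longleftrightarrow> (\<forall>b. \<exists>k. tcomp x b = sN k u)"
  shows "{C \<in> tensor_space sM sN. P C} = range (\<lambda>m. tpure sM sN m u)"
proof -
  have "P C \<longleftrightarrow> C \<in> range (\<lambda>m. tpure sM sN m u)" if C: "C \<in> tensor_space sM sN" for C
  proof -
    obtain x where "x \<in> free_elems" "C = tcls sM sN x"
      using C unfolding tensor_space_def by blast
    then show ?thesis by (simp only: assms tcls_in_range_tpure_iff)
  qed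
  moreover have "range (\<lambda>m. tpure sM sN m u) \<subseteq> tensor_space sM sN"
    unfolding tensor_space_def tpure_def by (auto intro: fgen_free_elems)
  ultimately show ?thesis by blast
qed

end

locale free_tensor_endo = free_tensor sM B sN + D: module_hom sN sN D
  for sM :: "'r::comm_ring_1 \<Rightarrow> 'm::ab_group_add \<Rightarrow> 'm" and B :: "'m set"
    and sN :: "'r \<Rightarrow> 'n::ab_group_add \<Rightarrow> 'n" and D :: "'n \<Rightarrow> 'n"
begin

lemma tcomp_fpush:
  assumes "x \<in> free_elems"
  shows "tcomp (fpush (\<lambda>(m, n). (m, D n)) x) b = D (tcomp x b)"
proof -
  have "tcomp (fpush (\<lambda>(m, n). (m, D n)) x) b
      = (\<Sum>p\<in>fsupp x. tcomp (fscale (x p) (fgen (fst p, D (snd p)))) b)"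
    unfolding fpush_expand[OF assms] by (auto intro!: tcomp_sum fscale_free_elems fgen_free_elems
        sum.cong simp: case_prod_beta)
  also have "\<dots> = (\<Sum>p\<in>fsupp x. D (sN (x p) (sN (M.coord (fst p) b) (snd p))))"
    by (simp only: tcomp_fscale[OF fgen_free_elems] tcomp_fgen fst_conv snd_conv D.scale)
  also have "\<dots> = D (tcomp x b)"
    by (simp only: D.sum tcomp_def)
  finally show ?thesis .
qed

lemma tensor_id_map_tcls_eq_iff:
  assumes "x \<in> free_elems" "y \<in> free_elems"
  shows "tensor_id_map sM sN D (tcls sM sN x) = tcls sM sN y \<longleftrightarrow> (\<forall>b. D (tcomp x b) = tcomp y b)"
proof -
  let ?z = "SOME z. z \<in> tcls sM sN x"
  have "fpush (\<lambda>(m, n). (m, D n)) ?z \<in> free_elems"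
    unfolding fpush_expand[OF tcomp_some_tcls(1)[OF assms(1)]]
    by (intro sum_free_elems fscale_free_elems fgen_free_elems)
  then show ?thesis
    unfolding tensor_id_map_def
    by (simp add: tcls_eq_iff assms(2) tcomp_fpush tcomp_some_tcls[OF assms(1)])
qed

lemma tensor_id_map_kernel:
  assumes "\<And>n. D n = 0 \<longleftrightarrow> (\<exists>k. n = sN k u)"
  shows "{C \<in> tensor_space sM sN. tensor_id_map sM sN D C = tcls sM sN 0}
    = range (\<lambda>m. tpure sM sN m u)"
  by (rule tensor_space_Collect_eq_range_tpure)
    (simp add: tensor_id_map_tcls_eq_iff zero_free_elems tcomp_zero assms)

lemma tensor_id_map_fixed_points:
  assumes "\<And>n. D n = n \<longleftrightarrow> (\<exists>k. n = sN k u)"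
  shows "{C \<in> tensor_space sM sN. tensor_id_map sM sN D C = C} = range (\<lambda>m. tpure sM sN m u)"
  by (rule tensor_space_Collect_eq_range_tpure) (simp add: tensor_id_map_tcls_eq_iff assms)

end

section \<open>The algebra E\<close>

locale comm_ring_hom =
  fixes f :: "'x::comm_ring_1 \<Rightarrow> 'y::comm_ring_1"
  assumes is_ring_hom: "is_ring_hom f"
begin

lemma add: "f (x + y) = f x + f y"
  and mult: "f (x * y) = f x * f y"
  and one: "f 1 = 1"
  using is_ring_hom by (simp_all add: is_ring_hom_def)

lemma zero: "f 0 = 0"
  using add[of 0 0] by simp

lemma diff: "f (x - y) = f x - f y"
  using add[of "x - y" y] by (simp add: eq_diff_eq)

lemma of_nat: "f (of_nat n) = of_nat n"
  by (induct n) (simp_all add: zero one add)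

lemma sum: "f (\<Sum>i\<in>A. g i) = (\<Sum>i\<in>A. f (g i))"
  by (induct A rule: infinite_finite_induct) (simp_all add: zero add)

lemma power: "f (x ^ n) = f x ^ n"
  by (induct n) (simp_all add: one mult)

end

lemma exists_top_degree:
  fixes c :: "'x \<times> nat \<Rightarrow> 'y::zero"
  assumes "finite (fsupp c)" "c (a, j) \<noteq> 0"
  obtains N where "j \<le> N" "c (a, N) \<noteq> 0" "\<forall>m>N. c (a, m) = 0"
proof -
  let ?M = "{m. c (a, m) \<noteq> 0}"
  have "?M \<subseteq> snd ` fsupp c" by (force simp: fsupp_def)
  then have fin: "finite ?M" using assms(1) finite_subset by blast
  have j: "j \<in> ?M" using assms(2) by simp
  have "j \<le> Max ?M" using fin j by (rule Max_ge)
  moreover have "Max ?M \<in> ?M" using fin j by (intro Max_in) auto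
  moreover have "\<forall>m>Max ?M. c (a, m) = 0" using fin Max_ge not_le by blast
  ultimately show ?thesis using that by blast
qed

locale E_algebra =
  fixes emb :: "'k::field_char_0 \<Rightarrow> 'a::comm_ring_1" and t :: 'a and R :: "'k set"
    and \<iota> :: "'a \<Rightarrow> 'e::comm_ring_1" and T :: "'k \<Rightarrow> 'e" and l :: 'e
  assumes laurent: "contains_laurent emb t"
    and reps: "reps_KZ R"
    and E_A: "is_E_A emb t R \<iota> T l"
begin

sublocale e: comm_ring_hom emb
  using laurent by unfold_locales (simp add: contains_laurent_def)

sublocale i: comm_ring_hom \<iota>
  using E_A by unfold_locales (simp add: is_E_A_def)

lemma emb_inj: "inj emb"
  using laurent by (simp add: contains_laurent_def)

lemma emb_mult_eq_0:
  assumes "k \<noteq> 0" "emb k * y = 0"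
  shows "y = 0"
proof -
  have "y = emb (inverse k * k) * y" using assms(1) by (simp add: e.one)
  also have "\<dots> = emb (inverse k) * (emb k * y)" by (simp add: e.mult mult.assoc)
  finally show ?thesis using assms(2) by simp
qed

lemma of_nat_mult_eq_0: "n \<noteq> 0 \<Longrightarrow> of_nat n * (y :: 'a) = 0 \<Longrightarrow> y = 0"
  using emb_mult_eq_0[of "of_nat n" y] by (simp add: e.of_nat)

lemma T_0: "T 0 = 1"
proof -
  have "T (of_int 0) = \<iota> (lpow t 0)" using E_A unfolding is_E_A_def by blast
  then show ?thesis by (simp add: lpow_def i.one)
qed

lemma E_A_spanning: "\<exists>S c. finite S \<and> S \<subseteq> R \<times> UNIV \<and> x = (\<Sum>(a, n)\<in>S. \<iota> (c a n) * T a * l ^ n)"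
  using E_A by (simp add: is_E_A_def)

lemma E_A_independent:
  "finite S \<Longrightarrow> S \<subseteq> R \<times> UNIV \<Longrightarrow> (\<Sum>(a, n)\<in>S. \<iota> (c a n) * T a * l ^ n) = 0
    \<Longrightarrow> (a, n) \<in> S \<Longrightarrow> c a n = 0"
  using E_A unfolding is_E_A_def by blast

lemma sum_monomials_case:
  "(\<Sum>i\<in>S. \<iota> (c i) * (case i of (a, n) \<Rightarrow> T a * l ^ n)) = (\<Sum>(a, n)\<in>S. \<iota> (c (a, n)) * T a * l ^ n)"
  by (rule sum.cong) (auto simp: mult.assoc)

sublocale Eb: module_with_basis "\<lambda>f x. \<iota> f * x" "\<lambda>(a, n). T a * l ^ n" "R \<times> UNIV"
proof unfold_locales
  fix x
  from E_A_spanning[of x] obtain S c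
    where "finite S \<and> S \<subseteq> R \<times> UNIV \<and> x = (\<Sum>(a, n)\<in>S. \<iota> (c a n) * T a * l ^ n)"
    by (elim exE)
  then show "\<exists>S c. finite S \<and> S \<subseteq> R \<times> UNIV \<and> x = (\<Sum>i\<in>S. \<iota> (c i) * (case i of (a, n) \<Rightarrow> T a * l ^ n))"
    by (intro exI[of _ S] exI[of _ "\<lambda>(a, n). c a n"]) (simp add: sum_monomials_case)
next
  fix S c i
  assume "finite S" "S \<subseteq> R \<times> UNIV" "(\<Sum>i\<in>S. \<iota> (c i) * (case i of (a, n) \<Rightarrow> T a * l ^ n)) = 0" "i \<in> S"
  then show "c i = 0"
    using E_A_independent[of S "\<lambda>a n. c (a, n)" "fst i" "snd i"] by (simp add: sum_monomials_case)
qed (simp_all add: i.add i.mult i.one algebra_simps)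

text \<open>\<open>ecoeff x (a, n)\<close> is the coefficient of \<open>t\<^sup>a \<ell>\<^sup>n\<close> in x.\<close>

abbreviation ecoeff :: "'e \<Rightarrow> 'k \<times> nat \<Rightarrow> 'a" where
  "ecoeff \<equiv> Eb.coord"

lemma iota_eq_0: "\<iota> f = 0 \<Longrightarrow> f = 0"
  using E_A_independent[of "{(0, 0)}" "\<lambda>_ _. f" 0 0] reps by (simp add: T_0 reps_KZ_def)

lemma E_repr: "x = (\<Sum>p\<in>fsupp (ecoeff x). \<iota> (ecoeff x p) * (T (fst p) * l ^ snd p))"
proof -
  have "x = (\<Sum>p\<in>fsupp (ecoeff x). \<iota> (ecoeff x p) * (case p of (a, n) \<Rightarrow> T a * l ^ n))"
    by (rule Eb.coord_repr[OF Eb.finite_fsupp_coord subset_refl])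
  then show ?thesis by (simp add: case_prod_beta)
qed

lemma fst_mem_R: "p \<in> fsupp (ecoeff x) \<Longrightarrow> fst p \<in> R"
  using Eb.fsupp_coord_subset[of x] by auto

lemma ecoeff_monomial: "a \<in> R \<Longrightarrow> ecoeff (T a * l ^ n) = (\<lambda>i. if i = (a, n) then 1 else 0)"
  using Eb.coord_basis[of "(a, n)"] by simp

lemma eq_iota_if_top_coeffs_at_origin:
  assumes "\<And>a N. ecoeff x (a, N) \<noteq> 0 \<Longrightarrow> \<forall>m>N. ecoeff x (a, m) = 0 \<Longrightarrow> a = 0 \<and> N = 0"
  shows "x = \<iota> (ecoeff x (0, 0))"
proof -
  have "ecoeff x p = 0" if "p \<noteq> (0, 0)" for p
  proof (rule ccontr)
    obtain a j where p: "p = (a, j)" by (cases p)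
    assume "ecoeff x p \<noteq> 0"
    then obtain N where "j \<le> N" "ecoeff x (a, N) \<noteq> 0" "\<forall>m>N. ecoeff x (a, m) = 0"
      using exists_top_degree[OF Eb.finite_fsupp_coord] p by metis
    then show False using assms that p by fastforce
  qed
  then have "fsupp (ecoeff x) \<subseteq> {(0, 0)}" by (auto simp: fsupp_def)
  then have "x = (\<Sum>p\<in>{(0, 0)}. \<iota> (ecoeff x p) * (case p of (a, n) \<Rightarrow> T a * l ^ n))"
    by (intro Eb.coord_repr) simp_all
  then show ?thesis by (simp add: T_0)
qed

end

locale E_derivation = E_algebra emb t R \<iota> T l
  for emb :: "'k::field_char_0 \<Rightarrow> 'a::comm_ring_1" and t R and \<iota> :: "'a \<Rightarrow> 'e::comm_ring_1" and T l +
  fixes d :: "'a \<Rightarrow> 'a" and dE :: "'e \<Rightarrow> 'e"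
  assumes derivation: "is_derivation d"
    and extends: "extends_tddt emb t d"
    and no_exp_log: "no_exp_no_log emb R d"
    and E_derivation: "is_E_derivation emb d \<iota> T l dE"
begin

lemma d_add: "d (x + y) = d x + d y"
  and d_mult: "d (x * y) = d x * y + x * d y"
  using derivation by (simp_all add: is_derivation_def)

lemma d_zero: "d 0 = 0"
  using d_add[of 0 0] by simp

lemma d_uminus: "d (- x) = - d x"
  using d_add[of x "- x"] by (simp add: d_zero add_eq_0_iff)

lemma d_one: "d 1 = 0"
  using d_mult[of 1 1] by simp

lemma dE_add: "dE (x + y) = dE x + dE y"
  and dE_mult: "dE (x * y) = dE x * y + x * dE y"
  and dE_iota: "dE (\<iota> f) = \<iota> (d f)"
  and dE_T: "dE (T a) = \<iota> (emb a) * T a"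
  and dE_l: "dE l = 1"
  using E_derivation by (simp_all add: is_E_derivation_def is_derivation_def)

lemma dE_sum: "dE (\<Sum>i\<in>A. g i) = (\<Sum>i\<in>A. dE (g i))"
  by (induct A rule: infinite_finite_induct) (simp_all add: dE_add flip: i.zero add: dE_iota d_zero)

lemma dE_power_l: "dE (l ^ n) = of_nat n * l ^ (n - 1)"
proof (induct n)
  case 0
  show ?case using dE_iota[of 1] by (simp add: i.one i.zero d_one)
next
  case (Suc n)
  then show ?case by (cases n) (simp_all add: dE_mult dE_l algebra_simps)
qed

lemma d_emb: "d (emb k) = 0"
  using extends unfolding extends_tddt_def
  by (auto dest!: spec[of _ "\<lambda>_. k"] spec[of _ "{0}"] simp: lpow_def e.zero)

lemma d_emb_mult: "d (emb k * y) = emb k * d y"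
  by (simp add: d_mult d_emb)

lemma d_of_nat_mult: "d (of_nat n * y) = of_nat n * d y"
  using d_emb_mult[of "of_nat n"] by (simp add: e.of_nat)

lemma d_d_eq_0_imp: "d (d f) = 0 \<Longrightarrow> f \<in> range emb"
  using no_exp_log unfolding no_exp_no_log_def by blast

lemma d_add_emb_mult_eq_0_imp: "a \<in> R \<Longrightarrow> a \<noteq> 0 \<Longrightarrow> d f + emb a * f = 0 \<Longrightarrow> f = 0"
  using no_exp_log unfolding no_exp_no_log_def by blast

lemma ecoeff_dE_monomial:
  assumes "a \<in> R"
  shows "ecoeff (dE (\<iota> f * (T a * l ^ n))) q =
     (if q = (a, n) then d f + f * emb a else 0) + (if q = (a, n - 1) then f * of_nat n else 0)"
proof -
  have "dE (\<iota> f * (T a * l ^ n))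
      = \<iota> (d f + f * emb a) * (T a * l ^ n) + \<iota> (f * of_nat n) * (T a * l ^ (n - 1))"
    by (simp add: dE_mult dE_iota dE_T dE_power_l i.add i.mult i.of_nat algebra_simps)
  then show ?thesis
    by (simp add: Eb.coord_add Eb.coord_scale ecoeff_monomial[OF assms])
qed

lemma ecoeff_dE:
  "ecoeff (dE x) (b, j) = d (ecoeff x (b, j)) + ecoeff x (b, j) * emb b + ecoeff x (b, Suc j) * of_nat (Suc j)"
proof -
  let ?c = "ecoeff x" and ?F = "fsupp (ecoeff x)"
  have "ecoeff (dE x) (b, j) = (\<Sum>p\<in>?F. ecoeff (dE (\<iota> (?c p) * (T (fst p) * l ^ snd p))) (b, j))"
    by (subst E_repr) (simp add: dE_sum Eb.coord_sum)
  also have "\<dots> = (\<Sum>p\<in>?F. (if p = (b, j) then d (?c p) + ?c p * emb b else 0)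
                     + (if p = (b, Suc j) then ?c p * of_nat (Suc j) else 0))"
  proof (rule sum.cong[OF refl])
    fix p assume p: "p \<in> ?F"
    obtain a n where pp: "p = (a, n)" by (cases p)
    have aR: "a \<in> R" using fst_mem_R[OF p] pp by simp
    show "ecoeff (dE (\<iota> (?c p) * (T (fst p) * l ^ snd p))) (b, j) =
      (if p = (b, j) then d (?c p) + ?c p * emb b else 0) + (if p = (b, Suc j) then ?c p * of_nat (Suc j) else 0)"
      unfolding pp fst_conv snd_conv ecoeff_dE_monomial[OF aR] by (cases n) auto
  qed
  also have "\<dots> = d (?c (b, j)) + ?c (b, j) * emb b + ?c (b, Suc j) * of_nat (Suc j)"
    using Eb.finite_fsupp_coord[of x]
    by (simp add: sum.distrib sum.delta' fsupp_def d_zero split: if_splits)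
  finally show ?thesis .
qed

theorem dE_eq_0_iff: "dE x = 0 \<longleftrightarrow> (\<exists>k. x = \<iota> (emb k))"
proof
  assume dx: "dE x = 0"
  let ?c = "ecoeff x"
  have rec: "d (?c (b, j)) + ?c (b, j) * emb b + ?c (b, Suc j) * of_nat (Suc j) = 0" for b j
    using ecoeff_dE[of x b j] by (simp add: dx Eb.coord_zero)
  have "a = 0 \<and> N = 0" if top: "?c (a, N) \<noteq> 0" "\<forall>m>N. ?c (a, m) = 0" for a N
  proof -
    have top_eq: "d (?c (a, N)) + emb a * ?c (a, N) = 0"
      using rec[of a N] top(2) by (simp add: mult.commute)
    have "a \<in> R" using top(1) fst_mem_R[of "(a, N)" x] by (simp add: fsupp_def)
    then have a: "a = 0" using top_eq top(1) d_add_emb_mult_eq_0_imp by blast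
    have "N = 0"
    proof (rule ccontr)
      assume N0: "N \<noteq> 0"
      then obtain M where N: "N = Suc M" by (cases N) auto
      have "d (?c (0, N)) = 0" using top_eq a by (simp add: e.zero)
      moreover have dM: "d (?c (0, M)) = - (of_nat N * ?c (0, N))"
        using rec[of 0 M] N by (simp add: e.zero eq_neg_iff_add_eq_0 mult.commute)
      ultimately have "d (d (?c (0, M))) = 0" by (simp add: d_uminus d_of_nat_mult)
      then obtain k where "?c (0, M) = emb k" using d_d_eq_0_imp by blast
      then have "of_nat N * ?c (0, N) = 0" using dM d_emb by simp
      then show False using of_nat_mult_eq_0[OF N0] top(1) a by blast
    qed
    with a show ?thesis ..
  qed
  then have x: "x = \<iota> (?c (0, 0))" by (rule eq_iota_if_top_coeffs_at_origin)
  then have "d (?c (0, 0)) = 0" using dx iota_eq_0 dE_iota by metis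
  then have "d (d (?c (0, 0))) = 0" by (simp add: d_zero)
  then obtain k where "?c (0, 0) = emb k" using d_d_eq_0_imp by blast
  then show "\<exists>k. x = \<iota> (emb k)" using x by metis
qed (auto simp: dE_iota d_emb i.zero)

end

locale E_shift = E_algebra emb t R \<iota> T l
  for emb :: "'k::field_char_0 \<Rightarrow> 'a::comm_ring_1" and t R and \<iota> :: "'a \<Rightarrow> 'e::comm_ring_1" and T l +
  fixes \<gamma> :: "'k \<Rightarrow> 'k" and \<sigma> :: "'e \<Rightarrow> 'e"
  assumes gamma: "gamma_iso \<gamma>"
    and E_sigma: "is_E_sigma emb \<gamma> \<iota> T l \<sigma>"
begin

sublocale s: comm_ring_hom \<sigma>
  using E_sigma by unfold_locales (simp add: is_E_sigma_def)

lemma sigma_iota: "\<sigma> (\<iota> f) = \<iota> f"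
  and sigma_T: "\<sigma> (T a) = \<iota> (emb (\<gamma> a)) * T a"
  and sigma_l: "\<sigma> l = l + 1"
  using E_sigma by (simp_all add: is_E_sigma_def)

lemma gamma_0: "\<gamma> 0 = 1"
  using gamma by (simp add: gamma_iso_def)

lemma gamma_eq_1_imp:
  assumes "a \<in> R" "\<gamma> a = 1"
  shows "a = 0"
proof -
  have "a \<in> \<int>" using gamma assms(2) by (simp add: gamma_iso_def)
  then show ?thesis
    using reps assms(1) unfolding reps_KZ_def by (metis Ints_0 diff_self diff_zero)
qed

lemma ecoeff_sigma_monomial:
  assumes "b \<in> R"
  shows "ecoeff (\<sigma> (\<iota> f * (T b * l ^ m))) (a, k)
    = (if a = b \<and> k \<le> m then f * emb (\<gamma> b) * of_nat (m choose k) else 0)"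
proof -
  have "\<sigma> (\<iota> f * (T b * l ^ m)) = \<iota> f * (\<iota> (emb (\<gamma> b)) * T b * (l + 1) ^ m)"
    by (simp add: s.mult s.power sigma_iota sigma_T sigma_l)
  also have "(l + 1) ^ m = (\<Sum>j\<le>m. of_nat (m choose j) * l ^ j * 1 ^ (m - j))"
    by (rule binomial_ring)
  finally have "\<sigma> (\<iota> f * (T b * l ^ m))
      = (\<Sum>j\<le>m. \<iota> (f * emb (\<gamma> b) * of_nat (m choose j)) * (T b * l ^ j))"
    by (simp add: sum_distrib_left i.mult i.of_nat algebra_simps)
  then have "ecoeff (\<sigma> (\<iota> f * (T b * l ^ m))) (a, k)
      = (\<Sum>j\<le>m. (f * emb (\<gamma> b) * of_nat (m choose j)) * (if (a, k) = (b, j) then 1 else 0))"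
    by (simp add: Eb.coord_sum Eb.coord_scale ecoeff_monomial[OF assms])
  also have "\<dots> = (\<Sum>j\<le>m. if j = k then (if a = b then f * emb (\<gamma> b) * of_nat (m choose j) else 0) else 0)"
    by (rule sum.cong) auto
  finally show ?thesis by simp
qed

lemma ecoeff_sigma:
  "ecoeff (\<sigma> x) (a, k) = (\<Sum>p\<in>fsupp (ecoeff x).
     if fst p = a \<and> k \<le> snd p then ecoeff x p * emb (\<gamma> a) * of_nat (snd p choose k) else 0)"
proof -
  have "ecoeff (\<sigma> x) (a, k)
      = (\<Sum>p\<in>fsupp (ecoeff x). ecoeff (\<sigma> (\<iota> (ecoeff x p) * (T (fst p) * l ^ snd p))) (a, k))"
    by (subst E_repr) (simp add: s.sum Eb.coord_sum)
  then show ?thesis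
    by (auto simp: ecoeff_sigma_monomial[OF fst_mem_R] intro: sum.cong)
qed

lemma ecoeff_sigma_top:
  assumes top: "\<forall>m>N. ecoeff x (a, m) = 0"
  shows "ecoeff (\<sigma> x) (a, N) = ecoeff x (a, N) * emb (\<gamma> a)"
    and "N = Suc M \<Longrightarrow>
      ecoeff (\<sigma> x) (a, M) = ecoeff x (a, M) * emb (\<gamma> a) + ecoeff x (a, N) * emb (\<gamma> a) * of_nat N"
proof -
  let ?c = "ecoeff x" and ?F = "fsupp (ecoeff x)"
  have fin: "finite ?F" by (rule Eb.finite_fsupp_coord)
  have le: "n \<le> N" if "(a, n) \<in> ?F" for n
    using that top by (auto simp: fsupp_def not_le[symmetric])
  have vanish: "?c p = 0" if "p \<notin> ?F" for p
    using that by (simp add: fsupp_def)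
  have "ecoeff (\<sigma> x) (a, N) = (\<Sum>p\<in>?F. if p = (a, N) then ?c p * emb (\<gamma> a) else 0)"
    unfolding ecoeff_sigma by (intro sum.cong) (auto dest!: le)
  also have "\<dots> = ?c (a, N) * emb (\<gamma> a)"
    using fin vanish by (simp add: sum.delta')
  finally show "ecoeff (\<sigma> x) (a, N) = ?c (a, N) * emb (\<gamma> a)" .
  assume N: "N = Suc M"
  have "ecoeff (\<sigma> x) (a, M) = (\<Sum>p\<in>?F. (if p = (a, M) then ?c p * emb (\<gamma> a) else 0)
      + (if p = (a, N) then ?c p * emb (\<gamma> a) * of_nat N else 0))"
    unfolding ecoeff_sigma using N by (intro sum.cong) (auto simp: le_Suc_eq dest!: le)
  also have "\<dots> = ?c (a, M) * emb (\<gamma> a) + ?c (a, N) * emb (\<gamma> a) * of_nat N"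
    using fin vanish by (simp add: sum.distrib sum.delta')
  finally show "ecoeff (\<sigma> x) (a, M) = ?c (a, M) * emb (\<gamma> a) + ?c (a, N) * emb (\<gamma> a) * of_nat N" .
qed

theorem sigma_fixed_iff: "\<sigma> x = x \<longleftrightarrow> (\<exists>f. x = \<iota> f)"
proof
  assume sx: "\<sigma> x = x"
  let ?c = "ecoeff x"
  have "a = 0 \<and> N = 0" if top: "?c (a, N) \<noteq> 0" "\<forall>m>N. ?c (a, m) = 0" for a N
  proof -
    have "emb (\<gamma> a - 1) * ?c (a, N) = 0"
      using ecoeff_sigma_top(1)[OF top(2)] sx by (simp add: e.diff e.one algebra_simps)
    then have "\<gamma> a - 1 = 0" using emb_mult_eq_0 top(1) by blast
    then have "\<gamma> a = 1" by simp
    moreover have "a \<in> R" using top(1) fst_mem_R[of "(a, N)" x] by (simp add: fsupp_def)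
    ultimately have a: "a = 0" by (intro gamma_eq_1_imp)
    have "N = 0"
    proof (rule ccontr)
      assume N0: "N \<noteq> 0"
      then obtain M where N: "N = Suc M" by (cases N) auto
      have "?c (a, M) = ?c (a, M) * emb (\<gamma> a) + ?c (a, N) * emb (\<gamma> a) * of_nat N"
        using ecoeff_sigma_top(2)[OF top(2) N] sx by simp
      then have "?c (a, N) * of_nat N = 0" using a by (simp add: gamma_0 e.one)
      then show False using of_nat_mult_eq_0[OF N0] top(1) by (metis mult.commute)
    qed
    with a show ?thesis ..
  qed
  then show "\<exists>f. x = \<iota> f" using eq_iota_if_top_coeffs_at_origin by blast
qed (auto simp: sigma_iota)

end

section \<open>Solutions in the tensor products\<close>

lemma (in E_derivation) tensor_Z_rep_dE_kernel:
  assumes "Z_rep sV rho"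
  shows "{C \<in> tensor_space sV (\<lambda>c x. \<iota> (emb c) * x).
           tensor_id_map sV (\<lambda>c x. \<iota> (emb c) * x) dE C = tcls sV (\<lambda>c x. \<iota> (emb c) * x) 0}
         = range (\<lambda>v. tpure sV (\<lambda>c x. \<iota> (emb c) * x) v 1)
       \<and> inj (\<lambda>v. tpure sV (\<lambda>c x. \<iota> (emb c) * x) v 1)"
proof -
  interpret V: vector_space sV using assms by (simp add: Z_rep_def)
  obtain B where "V.independent B" "UNIV \<subseteq> V.span B" using V.basis_exists[of UNIV] by blast
  then have "module_with_basis sV id B"
    by (intro module_with_basis_of_basis) (auto simp: module_iff_vector_space V.vector_space_axioms)
  moreover have "module (\<lambda>c x. \<iota> (emb c) * x)"
    by unfold_locales (simp_all add: i.add i.mult e.add e.mult e.one i.one algebra_simps)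
  ultimately have "free_tensor_endo sV B (\<lambda>c x. \<iota> (emb c) * x) dE"
    unfolding free_tensor_endo_def free_tensor_def module_hom_def module_hom_axioms_def
    by (simp add: dE_add dE_mult dE_iota d_emb i.zero)
  then interpret free_tensor_endo sV B "\<lambda>c x. \<iota> (emb c) * x" dE .
  have "dE n = 0 \<longleftrightarrow> (\<exists>k. n = \<iota> (emb k) * 1)" for n
    using dE_eq_0_iff by simp
  moreover have "k = 0" if "\<iota> (emb k) * 1 = 0" for k
  proof -
    have "emb k = emb 0" using that iota_eq_0 e.zero by simp
    then show ?thesis by (rule injD[OF emb_inj])
  qed
  ultimately show ?thesis
    by (intro conjI tensor_id_map_kernel inj_tpure)
qed

lemma (in E_shift) tensor_free_module_sigma_invariants:
  assumes "module sM" "free_module sM"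
  shows "{C \<in> tensor_space sM (\<lambda>f x. \<iota> f * x). tensor_id_map sM (\<lambda>f x. \<iota> f * x) \<sigma> C = C}
         = range (\<lambda>m. tpure sM (\<lambda>f x. \<iota> f * x) m 1)
       \<and> inj (\<lambda>m. tpure sM (\<lambda>f x. \<iota> f * x) m 1)"
proof -
  obtain B where "\<not> module.dependent sM B" "module.span sM B = UNIV"
    using assms(2) by (auto simp: free_module_def)
  then have "module_with_basis sM id B"
    by (rule module_with_basis_of_basis[OF assms(1)])
  then have "free_tensor_endo sM B (\<lambda>f x. \<iota> f * x) \<sigma>"
    unfolding free_tensor_endo_def free_tensor_def module_hom_def module_hom_axioms_def
    using Eb.module_axioms by (simp add: s.add s.mult sigma_iota)
  then interpret free_tensor_endo sM B "\<lambda>f x. \<iota> f * x" \<sigma> .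
  have "\<sigma> n = n \<longleftrightarrow> (\<exists>f. n = \<iota> f * 1)" for n
    using sigma_fixed_iff by simp
  moreover have "f = 0" if "\<iota> f * 1 = 0" for f
    using that iota_eq_0 by simp
  ultimately show ?thesis
    by (intro conjI tensor_id_map_fixed_points inj_tpure)
qed

theorem mainTheorem8:
  fixes emb :: "'k::field_char_0 \<Rightarrow> 'a::comm_ring_1"
    and t :: 'a and d :: "'a \<Rightarrow> 'a" and R :: "'k set" and \<gamma> :: "'k \<Rightarrow> 'k"
    and \<iota> :: "'a \<Rightarrow> 'e::comm_ring_1" and T :: "'k \<Rightarrow> 'e" and l :: 'e
    and dE :: "'e \<Rightarrow> 'e" and \<sigma> :: "'e \<Rightarrow> 'e"
    and sV :: "'k \<Rightarrow> 'v::ab_group_add \<Rightarrow> 'v" and rho :: "'v \<Rightarrow> 'v"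
    and sM :: "'a \<Rightarrow> 'm::ab_group_add \<Rightarrow> 'm" and nabla :: "'m \<Rightarrow> 'm"
  assumes "alg_closed TYPE('k)"
    and "contains_laurent emb t"
    and "is_derivation d" and "extends_tddt emb t d"
    and "reps_KZ R"
    and "no_exp_no_log emb R d"
    and "gamma_iso \<gamma>"
    and "is_E_A emb t R \<iota> T l"
    and "is_E_derivation emb d \<iota> T l dE"
    and "is_E_sigma emb \<gamma> \<iota> T l \<sigma>"
  shows "(Z_rep sV rho \<longrightarrow>
           {C \<in> tensor_space sV (\<lambda>c x. \<iota> (emb c) * x).
              tensor_id_map sV (\<lambda>c x. \<iota> (emb c) * x) dE C = tcls sV (\<lambda>c x. \<iota> (emb c) * x) 0}
             = range (\<lambda>v. tpure sV (\<lambda>c x. \<iota> (emb c) * x) v 1)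
           \<and> inj (\<lambda>v. tpure sV (\<lambda>c x. \<iota> (emb c) * x) v 1))
         \<and> (diff_module d sM nabla \<and> free_module sM \<longrightarrow>
           {C \<in> tensor_space sM (\<lambda>f x. \<iota> f * x).
              tensor_id_map sM (\<lambda>f x. \<iota> f * x) \<sigma> C = C}
             = range (\<lambda>m. tpure sM (\<lambda>f x. \<iota> f * x) m 1)
           \<and> inj (\<lambda>m. tpure sM (\<lambda>f x. \<iota> f * x) m 1))"
proof -
  \<comment> \<open>Neither the algebraic closedness of K nor the connection of M plays a role.\<close>
  interpret E_derivation emb t R \<iota> T l d dE
    by unfold_locales (use assms in auto)
  interpret E_shift emb t R \<iota> T l \<gamma> \<sigma>
    by unfold_locales (use assms in auto)
  have "module sM" if "diff_module d sM nabla"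
    using that by (simp add: diff_module_def)
  then show ?thesis
    using tensor_Z_rep_dE_kernel[of sV rho] tensor_free_module_sigma_invariants[of sM] by blast
qed

end
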